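(* Let $t\in[1,2]$ and assume $\|p_{>I}\|_1\ge\frac1n$. Then, provided $c_I$ is sufficiently small depending only on $\eta$, $$\rho^*_{p,t,n}(\eta)\gtrsim_\eta\frac{\|p_{>I}\|_1^{\frac{2-t}{t}}}{n^{\frac{2t-2}{t}}}.$$
   Context: Binomial model: $N\ge2$, $n\ge2$ even. For $q\in[0,1]^N$ one observes $X_1,\dots,X_n$ i.i.d. in $\{0,1\}^N$ with mutually independent coordinates $X_l(j)\sim\mathrm{Ber}(q_j)$; $\mathbb P_q$ is their joint law. $\|x\|_s=(\sum_j|x_j|^s)^{1/s}$. Known $p\in[0,1]^N$ with $p_1\ge\dots\ge p_N$ and $\max_jp_j\le1/2$; $\eta\in(0,1)$. For a test $\psi:(\{0,1\}^N)^n\to\{0,1\}$, $R_\rho(\psi)=\mathbb P_p(\psi=1)+\sup_{q\in[0,1]^N:\|p-q\|_t\ge\rho}\mathbb P_q(\psi=0)$, $R^*_\rho=\inf_\psi R_\rho(\psi)$, $\rho^*_{p,t,n}(\eta)=\inf\{\rho>0:R^*_\rho\le\eta\}$. $x_{>u}=(0,\dots,0,x_{u+1},\dots,x_N)$. $I=\min\{J\in\{0,\dots,N\}:\sum_{i>J}p_i^2\le c_I/n^2\}$ with $c_I>0$ a small constant depending only on $\eta$. $\gtrsim_\eta$ means up to a positive multiplicative constant depending only on $\eta$. *)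

theory Defs
  imports "HOL-Analysis.Analysis"
begin

text \<open>Coordinates are indexed by j < N (0-based; paper index j+1), samples by l < n.
A data set is a function X :: nat \<Rightarrow> nat \<Rightarrow> bool, X l j = X_{l+1}(j+1),
extended by False outside l < n, j < N.\<close>

definition sample_space :: "nat \<Rightarrow> nat \<Rightarrow> (nat \<Rightarrow> nat \<Rightarrow> bool) set" where
  "sample_space N n = PiE {..<n} (\<lambda>_. PiE {..<N} (\<lambda>_. UNIV))"

definition bin_weight :: "nat \<Rightarrow> nat \<Rightarrow> (nat \<Rightarrow> real) \<Rightarrow> (nat \<Rightarrow> nat \<Rightarrow> bool) \<Rightarrow> real" where
  "bin_weight N n q X = (\<Prod>l<n. \<Prod>j<N. (if X l j then q j else 1 - q j))"

definition bin_prob :: "nat \<Rightarrow> nat \<Rightarrow> (nat \<Rightarrow> real) \<Rightarrow> ((nat \<Rightarrow> nat \<Rightarrow> bool) \<Rightarrow> bool) \<Rightarrow> real" where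
  "bin_prob N n q A = (\<Sum>X\<in>sample_space N n. if A X then bin_weight N n q X else 0)"

definition lt_norm :: "nat \<Rightarrow> real \<Rightarrow> (nat \<Rightarrow> real) \<Rightarrow> real" where
  "lt_norm N s x = (\<Sum>j<N. \<bar>x j\<bar> powr s) powr (1 / s)"

text \<open>Risk of a test psi (True = reject the null, i.e. psi = 1). The supremum over an empty
set of alternatives is taken to be 0 (all probabilities are nonnegative, so inserting 0 does
not change a nonempty supremum).\<close>
definition risk :: "nat \<Rightarrow> nat \<Rightarrow> (nat \<Rightarrow> real) \<Rightarrow> real \<Rightarrow> real \<Rightarrow> ((nat \<Rightarrow> nat \<Rightarrow> bool) \<Rightarrow> bool) \<Rightarrow> real" where
  "risk N n p t \<rho> \<psi> = bin_prob N n p \<psi> +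
     Sup (insert 0 {bin_prob N n q (\<lambda>X. \<not> \<psi> X) | q.
        (\<forall>j<N. 0 \<le> q j \<and> q j \<le> 1) \<and> lt_norm N t (\<lambda>j. p j - q j) \<ge> \<rho>})"

definition minimax_risk :: "nat \<Rightarrow> nat \<Rightarrow> (nat \<Rightarrow> real) \<Rightarrow> real \<Rightarrow> real \<Rightarrow> real" where
  "minimax_risk N n p t \<rho> = Inf {risk N n p t \<rho> \<psi> | \<psi>. True}"

definition critical_radius :: "nat \<Rightarrow> nat \<Rightarrow> (nat \<Rightarrow> real) \<Rightarrow> real \<Rightarrow> real \<Rightarrow> real" where
  "critical_radius N n p t \<eta> = Inf {\<rho>. \<rho> > 0 \<and> minimax_risk N n p t \<rho> \<le> \<eta>}"

text \<open>I = min{J in {0..N} : sum_{i>J} p_i^2 <= c_I / n^2}; with 0-based indices p_{>J} are j in {J..<N}.\<close>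
definition tail_index :: "nat \<Rightarrow> nat \<Rightarrow> (nat \<Rightarrow> real) \<Rightarrow> real \<Rightarrow> nat" where
  "tail_index N n p cI = (LEAST J. J \<le> N \<and> (\<Sum>j\<in>{J..<N}. (p j)^2) \<le> cI / (real n)^2)"

definition tail_l1 :: "nat \<Rightarrow> (nat \<Rightarrow> real) \<Rightarrow> nat \<Rightarrow> real" where
  "tail_l1 N p u = (\<Sum>j\<in>{u..<N}. \<bar>p j\<bar>)"

end

theory Submission
  imports Defs
begin

(* Le Cam's method against a mixture of alternatives. On the tail T = {I..<N} the alternative q
   is drawn with independent coordinates: q_j = h_j with probability p_j / h_j and q_j = 0
   otherwise, where h_j = max(a, 2 p_j) and a = eps / (n^2 ||p_T||_1); off the tail q_j = p_j.
   Column by column the mixture likelihood dominates (1 - D_j) times the null likelihood, with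
   defect D_j = (n p_j)^2 for an all-zero column and n h_j otherwise, and the null expectation of
   sum_j D_j is at most 3 c_I + eps because sum_{j in T} p_j^2 <= c_I / n^2. Hence every test has
   risk at least 1 - 3 c_I - eps - P(||p - q||_t < rho). Coordinates with 2 p_j > a always
   contribute p_j^t to ||p - q||_t^t and every switched-on coordinate with 2 p_j <= a contributes
   (a/2)^t, so by a Chernoff bound ||p - q||_t^t >= ||p_T||_1 (a/2)^(t-1) / 16 except with
   probability 8 eps. Solving rho^t = ||p_T||_1 (a/2)^(t-1) / 16 gives the stated rate. *)

section \<open>Product structure of the binomial model\<close>

definition bernoulli_weight :: "real \<Rightarrow> bool \<Rightarrow> real" where
  "bernoulli_weight q b = (if b then q else 1 - q)"

definition column_weight :: "nat \<Rightarrow> real \<Rightarrow> (nat \<Rightarrow> bool) \<Rightarrow> real" where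
  "column_weight n q col = (\<Prod>l<n. bernoulli_weight q (col l))"

definition patterns :: "nat \<Rightarrow> (nat \<Rightarrow> bool) set" where
  "patterns N = PiE {..<N} (\<lambda>_. UNIV)"

definition pattern_weight :: "nat \<Rightarrow> (nat \<Rightarrow> real) \<Rightarrow> (nat \<Rightarrow> bool) \<Rightarrow> real" where
  "pattern_weight N \<pi> \<sigma> = (\<Prod>j<N. bernoulli_weight (\<pi> j) (\<sigma> j))"

lemma bernoulli_weight_nonneg: "0 \<le> q \<Longrightarrow> q \<le> 1 \<Longrightarrow> 0 \<le> bernoulli_weight q b"
  by (simp add: bernoulli_weight_def)

lemma sum_patterns_prod:
  "(\<Sum>\<sigma>\<in>patterns N. \<Prod>j<N. f j (\<sigma> j)) = (\<Prod>j<N. f j True + (f j False :: real))"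
  unfolding patterns_def by (subst prod_sum_PiE[symmetric]) (auto simp: UNIV_bool add.commute)

lemma sample_space_eq_PiE_patterns: "sample_space N n = PiE {..<n} (\<lambda>_. patterns N)"
  unfolding sample_space_def patterns_def ..

lemma sum_sample_space_prod:
  "(\<Sum>X\<in>sample_space N n. \<Prod>l<n. \<Prod>j<N. h l j (X l j))
     = (\<Prod>l<n. \<Prod>j<N. h l j True + (h l j False :: real))"
proof -
  have "(\<Sum>X\<in>sample_space N n. \<Prod>l<n. \<Prod>j<N. h l j (X l j))
      = (\<Prod>l<n. \<Sum>\<sigma>\<in>patterns N. \<Prod>j<N. h l j (\<sigma> j))"
    unfolding sample_space_eq_PiE_patterns
    by (rule prod_sum_PiE[symmetric]) (auto simp: patterns_def intro: finite_PiE)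
  then show ?thesis by (simp add: sum_patterns_prod)
qed

lemma bin_weight_eq_prod_column_weight:
  "bin_weight N n q X = (\<Prod>j<N. column_weight n (q j) (\<lambda>l. X l j))"
  unfolding bin_weight_def column_weight_def bernoulli_weight_def by (subst prod.swap) simp

lemma bin_weight_nonneg: "(\<And>j. j < N \<Longrightarrow> 0 \<le> q j \<and> q j \<le> 1) \<Longrightarrow> 0 \<le> bin_weight N n q X"
  unfolding bin_weight_def by (auto intro!: prod_nonneg)

lemma sum_bin_weight: "(\<Sum>X\<in>sample_space N n. bin_weight N n q X) = 1"
  using sum_sample_space_prod[of "\<lambda>l j. bernoulli_weight (q j)" N n]
  by (simp add: bin_weight_def bernoulli_weight_def)

lemma sum_bin_weight_coordinate:
  assumes "l0 < n" "j0 < N"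
  shows "(\<Sum>X\<in>sample_space N n. if X l0 j0 then bin_weight N n q X else 0) = q j0"
proof -
  let ?h = "\<lambda>l j b. if l = l0 \<and> j = j0 \<and> \<not> b then 0 else bernoulli_weight (q j) b"
  have "(if X l0 j0 then bin_weight N n q X else 0) = (\<Prod>l<n. \<Prod>j<N. ?h l j (X l j))" for X
  proof (cases "X l0 j0")
    case False
    then have "(\<Prod>j<N. ?h l0 j (X l0 j)) = 0"
      using assms by (intro prod_zero) auto
    then show ?thesis
      using False assms by (auto intro!: prod_zero[symmetric])
  qed (auto simp: bin_weight_def bernoulli_weight_def intro!: prod.cong)
  moreover have "(\<Prod>j<N. ?h l j True + ?h l j False) = (if l = l0 then q j0 else 1)" for l
  proof (cases "l = l0")
    case True
    then have "(\<Prod>j<N. ?h l j True + ?h l j False) = (\<Prod>j<N. if j = j0 then q j0 else 1)"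
      by (intro prod.cong) (auto simp: bernoulli_weight_def)
    then show ?thesis using True assms by simp
  qed (simp add: bernoulli_weight_def)
  ultimately show ?thesis
    using sum_sample_space_prod[of ?h N n] assms by simp
qed

lemma sum_bin_weight_column_count:
  assumes "j < N"
  shows "(\<Sum>X\<in>sample_space N n. bin_weight N n q X * (\<Sum>l<n. if X l j then 1 else 0)) = real n * q j"
proof -
  have "(\<Sum>X\<in>sample_space N n. bin_weight N n q X * (\<Sum>l<n. if X l j then 1 else 0))
      = (\<Sum>l<n. \<Sum>X\<in>sample_space N n. if X l j then bin_weight N n q X else 0)"
    unfolding sum_distrib_left by (subst sum.swap) (auto intro!: sum.cong)
  also have "\<dots> = (\<Sum>l<n. q j)"
    using assms by (intro sum.cong) (auto simp: sum_bin_weight_coordinate)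
  finally show ?thesis by simp
qed

lemma bin_prob_nonneg: "(\<And>j. j < N \<Longrightarrow> 0 \<le> q j \<and> q j \<le> 1) \<Longrightarrow> 0 \<le> bin_prob N n q A"
  unfolding bin_prob_def by (auto intro!: sum_nonneg bin_weight_nonneg)

lemma bin_prob_le_one:
  assumes "\<And>j. j < N \<Longrightarrow> 0 \<le> q j \<and> q j \<le> 1"
  shows "bin_prob N n q A \<le> 1"
proof -
  have "bin_prob N n q A \<le> (\<Sum>X\<in>sample_space N n. bin_weight N n q X)"
    unfolding bin_prob_def by (rule sum_mono) (use bin_weight_nonneg[OF assms] in auto)
  then show ?thesis by (simp add: sum_bin_weight)
qed

lemma bin_prob_add_compl: "bin_prob N n q A + bin_prob N n q (\<lambda>X. \<not> A X) = 1"
proof -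
  have "bin_prob N n q A + bin_prob N n q (\<lambda>X. \<not> A X) = (\<Sum>X\<in>sample_space N n. bin_weight N n q X)"
    unfolding bin_prob_def sum.distrib[symmetric] by (rule sum.cong) auto
  then show ?thesis by (simp add: sum_bin_weight)
qed

lemma pattern_weight_nonneg: "(\<And>j. j < N \<Longrightarrow> 0 \<le> \<pi> j \<and> \<pi> j \<le> 1) \<Longrightarrow> 0 \<le> pattern_weight N \<pi> \<sigma>"
  unfolding pattern_weight_def by (auto intro!: prod_nonneg bernoulli_weight_nonneg)

lemma sum_pattern_weight: "(\<Sum>\<sigma>\<in>patterns N. pattern_weight N \<pi> \<sigma>) = 1"
  using sum_patterns_prod[of "\<lambda>j. bernoulli_weight (\<pi> j)" N]
  by (simp add: pattern_weight_def bernoulli_weight_def)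

lemma sum_pattern_weight_bin_weight:
  "(\<Sum>\<sigma>\<in>patterns N. pattern_weight N \<pi> \<sigma> * bin_weight N n (\<lambda>j. v j (\<sigma> j)) X)
   = (\<Prod>j<N. (1 - \<pi> j) * column_weight n (v j False) (\<lambda>l. X l j)
              + \<pi> j * column_weight n (v j True) (\<lambda>l. X l j))"
proof -
  have "pattern_weight N \<pi> \<sigma> * bin_weight N n (\<lambda>j. v j (\<sigma> j)) X
      = (\<Prod>j<N. bernoulli_weight (\<pi> j) (\<sigma> j) * column_weight n (v j (\<sigma> j)) (\<lambda>l. X l j))" for \<sigma>
    by (simp add: pattern_weight_def bin_weight_eq_prod_column_weight prod.distrib)
  then show ?thesis
    using sum_patterns_prod[of "\<lambda>j b. bernoulli_weight (\<pi> j) b * column_weight n (v j b) (\<lambda>l. X l j)" N]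
    by (simp add: bernoulli_weight_def add.commute)
qed

section \<open>Lower bounds for the risk\<close>

lemma lt_norm_ge:
  assumes "0 < \<rho>" "1 \<le> t" "\<rho> powr t \<le> (\<Sum>j<N. \<bar>x j\<bar> powr t)"
  shows "\<rho> \<le> lt_norm N t x"
proof -
  have "\<rho> = (\<rho> powr t) powr (1 / t)"
    using assms by (simp add: powr_powr)
  also have "\<dots> \<le> lt_norm N t x"
    unfolding lt_norm_def using assms by (intro powr_mono2) auto
  finally show ?thesis .
qed

lemma lt_norm_le_card:
  assumes "\<And>j. j < N \<Longrightarrow> \<bar>x j\<bar> \<le> 1" "1 \<le> t" "1 \<le> N"
  shows "lt_norm N t x \<le> real N"
proof -
  have "\<bar>x j\<bar> powr t \<le> 1 powr t" if "j < N" for j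
    using assms(1)[OF that] assms(2) by (intro powr_mono2) auto
  then have "(\<Sum>j<N. \<bar>x j\<bar> powr t) \<le> (\<Sum>j<N. 1 powr t)"
    by (intro sum_mono) auto
  then have "lt_norm N t x \<le> real N powr (1 / t)"
    unfolding lt_norm_def using assms by (intro powr_mono2) (auto intro: sum_nonneg)
  also have "\<dots> \<le> real N powr 1"
    using assms by (intro powr_mono) auto
  finally show ?thesis using assms by simp
qed

lemma risk_alternatives_bdd_above:
  "bdd_above (insert 0 {bin_prob N n q (\<lambda>X. \<not> \<psi> X) | q.
     (\<forall>j<N. 0 \<le> q j \<and> q j \<le> 1) \<and> lt_norm N t (\<lambda>j. p j - q j) \<ge> \<rho>})"
  by (rule bdd_aboveI[of _ 1]) (auto intro: bin_prob_le_one)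

lemma bin_prob_null_le_risk: "bin_prob N n p \<psi> \<le> risk N n p t \<rho> \<psi>"
  unfolding risk_def using risk_alternatives_bdd_above by (auto intro: cSup_upper)

lemma bin_prob_alternative_le_risk:
  assumes "\<And>j. j < N \<Longrightarrow> 0 \<le> q j \<and> q j \<le> 1" "\<rho> \<le> lt_norm N t (\<lambda>j. p j - q j)"
  shows "bin_prob N n p \<psi> + bin_prob N n q (\<lambda>X. \<not> \<psi> X) \<le> risk N n p t \<rho> \<psi>"
  unfolding risk_def using assms risk_alternatives_bdd_above by (auto intro!: cSup_upper)

lemma risk_nonneg: "(\<And>j. j < N \<Longrightarrow> 0 \<le> p j \<and> p j \<le> 1) \<Longrightarrow> 0 \<le> risk N n p t \<rho> \<psi>"
  using bin_prob_null_le_risk bin_prob_nonneg order_trans by blast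

lemma risk_eq_bin_prob_if_no_alternative:
  assumes "\<And>q. \<forall>j<N. 0 \<le> q j \<and> q j \<le> 1 \<Longrightarrow> lt_norm N t (\<lambda>j. p j - q j) < \<rho>"
  shows "risk N n p t \<rho> \<psi> = bin_prob N n p \<psi>"
proof -
  have no_alternative: "{bin_prob N n q (\<lambda>X. \<not> \<psi> X) | q.
           (\<forall>j<N. 0 \<le> q j \<and> q j \<le> 1) \<and> lt_norm N t (\<lambda>j. p j - q j) \<ge> \<rho>} = {}"
    using assms by (auto simp: not_le[symmetric])
  show ?thesis unfolding risk_def no_alternative by simp
qed

lemma minimax_risk_ge: "(\<And>\<psi>. b \<le> risk N n p t \<rho> \<psi>) \<Longrightarrow> b \<le> minimax_risk N n p t \<rho>"
  unfolding minimax_risk_def by (rule cInf_greatest) auto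

lemma minimax_risk_beyond_diameter:
  assumes p01: "\<And>j. j < N \<Longrightarrow> 0 \<le> p j \<and> p j \<le> 1" and "1 \<le> t" "1 \<le> N"
  shows "minimax_risk N n p t (real N + 1) \<le> 0"
proof -
  have "lt_norm N t (\<lambda>j. p j - q j) < real N + 1" if "\<forall>j<N. 0 \<le> q j \<and> q j \<le> 1" for q
  proof -
    have "\<bar>p j - q j\<bar> \<le> 1" if "j < N" for j
      using that \<open>\<forall>j<N. 0 \<le> q j \<and> q j \<le> 1\<close> p01[of j] by (auto simp: abs_le_iff)
    then show ?thesis using lt_norm_le_card[of N "\<lambda>j. p j - q j" t] assms by fastforce
  qed
  then have "risk N n p t (real N + 1) (\<lambda>_. False) = 0"
    by (subst risk_eq_bin_prob_if_no_alternative) (auto simp: bin_prob_def)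
  moreover have "minimax_risk N n p t (real N + 1) \<le> risk N n p t (real N + 1) (\<lambda>_. False)"
    unfolding minimax_risk_def by (rule cInf_lower) (auto intro!: bdd_belowI[of _ 0] risk_nonneg p01)
  ultimately show ?thesis by simp
qed

lemma critical_radius_ge:
  assumes "\<And>j. j < N \<Longrightarrow> 0 \<le> p j \<and> p j \<le> 1" "1 \<le> t" "1 \<le> N" "0 \<le> \<eta>"
    and "\<And>\<rho>. 0 < \<rho> \<Longrightarrow> \<rho> < B \<Longrightarrow> \<eta> < minimax_risk N n p t \<rho>"
  shows "B \<le> critical_radius N n p t \<eta>"
  unfolding critical_radius_def
proof (rule cInf_greatest)
  show "{\<rho>. 0 < \<rho> \<and> minimax_risk N n p t \<rho> \<le> \<eta>} \<noteq> {}"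
    using minimax_risk_beyond_diameter[of N p t n] assms
    by (intro ex_in_conv[THEN iffD1] exI[of _ "real N + 1"]) auto
  show "B \<le> \<rho>" if "\<rho> \<in> {\<rho>. 0 < \<rho> \<and> minimax_risk N n p t \<rho> \<le> \<eta>}" for \<rho>
    using that assms(5)[of \<rho>] by force
qed

lemma bin_prob_le_mixture:
  assumes p01: "\<And>j. j < N \<Longrightarrow> 0 \<le> p j \<and> p j \<le> 1"
    and D_nonneg: "\<And>X. 0 \<le> D X"
    and dominated: "\<And>X. X \<in> sample_space N n \<Longrightarrow> (1 - D X) * bin_weight N n p X
          \<le> (\<Sum>\<sigma>\<in>patterns N. pattern_weight N \<pi> \<sigma> * bin_weight N n (\<lambda>j. v j (\<sigma> j)) X)"
    and expectation: "(\<Sum>X\<in>sample_space N n. D X * bin_weight N n p X) \<le> \<Delta>"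
  shows "bin_prob N n p A - \<Delta>
    \<le> (\<Sum>\<sigma>\<in>patterns N. pattern_weight N \<pi> \<sigma> * bin_prob N n (\<lambda>j. v j (\<sigma> j)) A)"
proof -
  let ?w = "bin_weight N n p"
  have "(\<Sum>X\<in>sample_space N n. if A X then D X * ?w X else 0) \<le> (\<Sum>X\<in>sample_space N n. D X * ?w X)"
    by (rule sum_mono) (use D_nonneg bin_weight_nonneg[OF p01] in auto)
  moreover have "(\<Sum>X\<in>sample_space N n. if A X then (1 - D X) * ?w X else 0)
      = bin_prob N n p A - (\<Sum>X\<in>sample_space N n. if A X then D X * ?w X else 0)"
    unfolding bin_prob_def sum_subtractf[symmetric] by (rule sum.cong) (auto simp: algebra_simps)
  ultimately have "bin_prob N n p A - \<Delta> \<le> (\<Sum>X\<in>sample_space N n. if A X then (1 - D X) * ?w X else 0)"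
    using expectation by linarith
  also have "\<dots> \<le> (\<Sum>X\<in>sample_space N n. if A X then
      (\<Sum>\<sigma>\<in>patterns N. pattern_weight N \<pi> \<sigma> * bin_weight N n (\<lambda>j. v j (\<sigma> j)) X) else 0)"
    by (rule sum_mono) (auto intro: dominated)
  also have "\<dots> = (\<Sum>\<sigma>\<in>patterns N. pattern_weight N \<pi> \<sigma> * bin_prob N n (\<lambda>j. v j (\<sigma> j)) A)"
    unfolding bin_prob_def sum_distrib_left by (subst sum.swap) (auto intro!: sum.cong)
  finally show ?thesis .
qed

lemma mixture_le_risk:
  assumes \<pi>01: "\<And>j. j < N \<Longrightarrow> 0 \<le> \<pi> j \<and> \<pi> j \<le> 1"
    and v01: "\<And>j b. j < N \<Longrightarrow> 0 \<le> v j b \<and> v j b \<le> 1"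
    and bad: "(\<Sum>\<sigma>\<in>patterns N. pattern_weight N \<pi> \<sigma>
        * (if \<rho> \<le> lt_norm N t (\<lambda>j. p j - v j (\<sigma> j)) then 0 else 1)) \<le> \<beta>"
  shows "(\<Sum>\<sigma>\<in>patterns N. pattern_weight N \<pi> \<sigma> * bin_prob N n (\<lambda>j. v j (\<sigma> j)) (\<lambda>X. \<not> \<psi> X))
    \<le> risk N n p t \<rho> \<psi> - bin_prob N n p \<psi> + \<beta>"
proof -
  let ?s = "risk N n p t \<rho> \<psi> - bin_prob N n p \<psi>"
  let ?bad = "\<lambda>\<sigma>. if \<rho> \<le> lt_norm N t (\<lambda>j. p j - v j (\<sigma> j)) then 0 else 1 :: real"
  have s_nonneg: "0 \<le> ?s"
    using bin_prob_null_le_risk[of N n p \<psi> t \<rho>] by simp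
  have "bin_prob N n (\<lambda>j. v j (\<sigma> j)) (\<lambda>X. \<not> \<psi> X) \<le> ?s + ?bad \<sigma>" for \<sigma>
  proof (cases "\<rho> \<le> lt_norm N t (\<lambda>j. p j - v j (\<sigma> j))")
    case True
    have "bin_prob N n p \<psi> + bin_prob N n (\<lambda>j. v j (\<sigma> j)) (\<lambda>X. \<not> \<psi> X) \<le> risk N n p t \<rho> \<psi>"
      using True v01 by (intro bin_prob_alternative_le_risk) auto
    then show ?thesis using True by simp
  next
    case False
    have "bin_prob N n (\<lambda>j. v j (\<sigma> j)) (\<lambda>X. \<not> \<psi> X) \<le> 1"
      using v01 by (intro bin_prob_le_one) auto
    then show ?thesis using False s_nonneg by simp
  qed
  then have "(\<Sum>\<sigma>\<in>patterns N. pattern_weight N \<pi> \<sigma> * bin_prob N n (\<lambda>j. v j (\<sigma> j)) (\<lambda>X. \<not> \<psi> X))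
      \<le> (\<Sum>\<sigma>\<in>patterns N. pattern_weight N \<pi> \<sigma> * ?s + pattern_weight N \<pi> \<sigma> * ?bad \<sigma>)"
    using pattern_weight_nonneg[OF \<pi>01] by (intro sum_mono) (simp add: distrib_left[symmetric] mult_left_mono)
  also have "\<dots> \<le> ?s + \<beta>"
    using bad by (simp add: sum.distrib sum_distrib_right[symmetric] sum_pattern_weight)
  finally show ?thesis by simp
qed

lemma risk_ge_mixture:
  assumes "\<And>j. j < N \<Longrightarrow> 0 \<le> \<pi> j \<and> \<pi> j \<le> 1" "\<And>j b. j < N \<Longrightarrow> 0 \<le> v j b \<and> v j b \<le> 1"
    and "\<And>j. j < N \<Longrightarrow> 0 \<le> p j \<and> p j \<le> 1" "\<And>X. 0 \<le> D X"
    and "\<And>X. X \<in> sample_space N n \<Longrightarrow> (1 - D X) * bin_weight N n p X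
          \<le> (\<Sum>\<sigma>\<in>patterns N. pattern_weight N \<pi> \<sigma> * bin_weight N n (\<lambda>j. v j (\<sigma> j)) X)"
    and "(\<Sum>X\<in>sample_space N n. D X * bin_weight N n p X) \<le> \<Delta>"
    and "(\<Sum>\<sigma>\<in>patterns N. pattern_weight N \<pi> \<sigma>
        * (if \<rho> \<le> lt_norm N t (\<lambda>j. p j - v j (\<sigma> j)) then 0 else 1)) \<le> \<beta>"
  shows "1 - \<Delta> - \<beta> \<le> risk N n p t \<rho> \<psi>"
proof -
  have "bin_prob N n p (\<lambda>X. \<not> \<psi> X) - \<Delta> \<le> risk N n p t \<rho> \<psi> - bin_prob N n p \<psi> + \<beta>"
    using bin_prob_le_mixture[OF assms(3-6)] mixture_le_risk[OF assms(1,2,7)] by (rule order_trans)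
  then show ?thesis
    using bin_prob_add_compl[of N n p \<psi>] by simp
qed

lemma one_minus_sum_le_prod_one_minus:
  assumes "finite I" "\<And>i. i \<in> I \<Longrightarrow> 0 \<le> x i \<and> x i \<le> (1::real)"
  shows "1 - (\<Sum>i\<in>I. x i) \<le> (\<Prod>i\<in>I. 1 - x i)"
  using assms
proof (induction I rule: finite_induct)
  case (insert i I)
  then have "1 - (x i + sum x I) \<le> (1 - x i) * (1 - sum x I)"
    by (simp add: algebra_simps sum_nonneg)
  also have "\<dots> \<le> (1 - x i) * (\<Prod>i\<in>I. 1 - x i)"
    using insert by (intro mult_left_mono) auto
  finally show ?case using insert by simp
qed simp

lemma one_minus_mult_le_power: "a \<le> 1 \<Longrightarrow> 1 - real m * a \<le> (1 - a :: real) ^ m"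
  using Bernoulli_inequality[of "-a" m] by simp

lemma zero_column_mixture_ge:
  fixes p a :: real
  assumes "0 \<le> p" "p \<le> a" "a \<le> 1" "0 < a" "real n * p \<le> 1"
  shows "(1 - (real n * p)^2) * (1 - p)^n \<le> (1 - p / a) + p / a * (1 - a)^n"
proof -
  have "(1 + real n * p) * (1 - p)^n \<le> (1 + p)^n * (1 - p)^n"
    using Bernoulli_inequality[of p n] assms by (intro mult_right_mono) auto
  also have "\<dots> = (1 - p^2)^n"
    by (simp add: power_mult_distrib[symmetric] power2_eq_square algebra_simps)
  also have "\<dots> \<le> 1"
    using assms by (intro power_le_one) (auto simp: power2_eq_square intro: mult_le_one)
  finally have "(1 - real n * p) * ((1 + real n * p) * (1 - p)^n) \<le> 1 - real n * p"
    using assms by (simp add: mult_left_le)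
  then have "(1 - (real n * p)^2) * (1 - p)^n \<le> 1 - real n * p"
    by (simp add: power2_eq_square algebra_simps)
  also have "\<dots> = (1 - p / a) + p / a * (1 - real n * a)"
    using assms by (simp add: field_simps)
  also have "\<dots> \<le> (1 - p / a) + p / a * (1 - a)^n"
    using assms one_minus_mult_le_power[of a n] by (intro add_left_mono mult_left_mono) auto
  finally show ?thesis .
qed

text \<open>The entry col l0 contributes the likelihood ratio a / p, which pays for the prior odds p / a;
  every other entry loses at most the factor 1 - a.\<close>

lemma nonzero_column_mixture_ge:
  fixes p a :: real
  assumes "0 \<le> p" "p \<le> a" "a \<le> 1" "0 < a" and "l0 < n" "col l0"
  shows "(1 - real n * a) * column_weight n p col \<le> p / a * column_weight n a col"
proof -
  let ?R = "{..<n} - {l0}"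
  have split: "column_weight n q col = q * (\<Prod>l\<in>?R. bernoulli_weight q (col l))" for q
    using prod.remove[of "{..<n}" l0 "\<lambda>l. bernoulli_weight q (col l)"] assms
    by (simp add: column_weight_def bernoulli_weight_def)
  have R_nonneg: "0 \<le> (\<Prod>l\<in>?R. bernoulli_weight p (col l))"
    using assms by (intro prod_nonneg bernoulli_weight_nonneg) auto
  have "0 \<le> (1 - a) * bernoulli_weight p b \<and> (1 - a) * bernoulli_weight p b \<le> bernoulli_weight a b" for b
  proof (cases b)
    case True
    have "(1 - a) * p \<le> p" using assms by (simp add: mult_left_le_one_le)
    then show ?thesis using True assms by (simp add: bernoulli_weight_def)
  next
    case False
    have "(1 - a) * (1 - p) \<le> 1 - a" using assms by (simp add: mult_right_le_one_le)
    then show ?thesis using False assms by (simp add: bernoulli_weight_def)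
  qed
  then have "(\<Prod>l\<in>?R. (1 - a) * bernoulli_weight p (col l)) \<le> (\<Prod>l\<in>?R. bernoulli_weight a (col l))"
    by (intro prod_mono) auto
  then have "(1 - a)^(n - 1) * (\<Prod>l\<in>?R. bernoulli_weight p (col l))
      \<le> (\<Prod>l\<in>?R. bernoulli_weight a (col l))"
    using assms by (simp add: prod.distrib card_Diff_singleton)
  moreover have "1 - real n * a \<le> (1 - a)^(n - 1)"
    using one_minus_mult_le_power[of a "n - 1"] assms by (auto simp: of_nat_diff algebra_simps)
  ultimately have "(1 - real n * a) * (\<Prod>l\<in>?R. bernoulli_weight p (col l))
      \<le> (\<Prod>l\<in>?R. bernoulli_weight a (col l))"
    using R_nonneg by (meson mult_right_mono order_trans)
  then have "p * ((1 - real n * a) * (\<Prod>l\<in>?R. bernoulli_weight p (col l)))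
      \<le> p / a * (a * (\<Prod>l\<in>?R. bernoulli_weight a (col l)))"
    using assms by (simp add: mult_left_mono)
  then show ?thesis
    unfolding split by (simp add: algebra_simps)
qed

lemma column_mixture_ge:
  fixes p a :: real
  assumes "0 \<le> p" "p \<le> a" "a \<le> 1" "0 < a" "real n * p \<le> 1"
  shows "(1 - (if \<forall>l<n. \<not> col l then (real n * p)^2 else real n * a)) * column_weight n p col
     \<le> (1 - p / a) * column_weight n 0 col + p / a * column_weight n a col"
proof (cases "\<forall>l<n. \<not> col l")
  case True
  then have "column_weight n q col = (1 - q)^n" for q
    by (simp add: column_weight_def bernoulli_weight_def)
  then show ?thesis
    using True zero_column_mixture_ge[OF assms] by simp
next
  case False
  then obtain l0 where l0: "l0 < n" "col l0" by auto
  then have "column_weight n 0 col = 0"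
    by (auto simp: column_weight_def bernoulli_weight_def intro!: prod_zero bexI[of _ l0])
  then show ?thesis
    using nonzero_column_mixture_ge[OF assms(1-4) l0(1), of col] l0(2) by (simp only: if_not_P[OF False]) simp
qed

lemma mult_powr_le_powr:
  fixes u x y t :: real
  assumes "0 < u" "u \<le> x" "x \<le> y" "1 \<le> t"
  shows "u powr (t - 1) * x \<le> y powr t"
proof -
  have "u powr (t - 1) * x \<le> x powr (t - 1) * x"
    using assms by (intro mult_right_mono powr_mono2) auto
  also have "\<dots> = x powr t"
    using assms by (simp add: powr_diff)
  also have "\<dots> \<le> y powr t"
    using assms by (intro powr_mono2) auto
  finally show ?thesis .
qed

lemma radius_threshold:
  fixes \<epsilon> L t \<rho> :: real and n :: nat
  assumes "0 < \<epsilon>" "\<epsilon> \<le> 1" "0 < L" "1 \<le> n" "1 \<le> t" "0 < \<rho>"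
    and "\<rho> < \<epsilon> / 32 * L powr ((2 - t) / t) / real n powr ((2 * t - 2) / t)"
  shows "\<rho> powr t \<le> L / 16 * (\<epsilon> / ((real n)^2 * L) / 2) powr (t - 1)"
proof -
  let ?E = "(\<epsilon> / 2) powr (t - 1)" and ?Lt = "L powr (t - 1)" and ?Nt = "real n powr (2 * t - 2)"
  have n: "0 < real n"
    using assms by simp
  have "\<rho> powr t \<le> (\<epsilon> / 32 * L powr ((2 - t) / t) / real n powr ((2 * t - 2) / t)) powr t"
    using assms by (intro powr_mono2) auto
  also have "\<dots> = (\<epsilon> / 32) powr t * (L powr ((2 - t) / t)) powr t / (real n powr ((2 * t - 2) / t)) powr t"
    using assms n by (simp add: powr_divide powr_mult)
  also have "\<dots> = (\<epsilon> / 32) powr t * L powr (2 - t) / ?Nt"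
    using assms by (simp add: powr_powr)
  also have "\<dots> \<le> (1 / 16 * ?E) * L powr (2 - t) / ?Nt"
  proof -
    have "(\<epsilon> / 32) powr t = \<epsilon> / 32 * (\<epsilon> / 32) powr (t - 1)"
      using assms by (simp add: powr_diff)
    also have "\<dots> \<le> 1 / 16 * ?E"
      using assms by (intro mult_mono powr_mono2) auto
    finally show ?thesis
      by (intro divide_right_mono mult_right_mono) auto
  qed
  also have "\<dots> = L / 16 * (?E / (?Nt * ?Lt))"
    using assms n by (simp add: powr_diff field_simps power2_eq_square)
  also have "?E / (?Nt * ?Lt) = (\<epsilon> / ((real n)^2 * L) / 2) powr (t - 1)"
  proof -
    have "(real n)^2 = real n powr 2"
      using powr_realpow[of "real n" 2] n by simp
    then have "((real n)^2) powr (t - 1) = real n powr (2 * (t - 1))"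
      by (metis powr_powr)
    then have nt: "((real n)^2) powr (t - 1) = ?Nt"
      by (simp add: algebra_simps)
    have "\<epsilon> / ((real n)^2 * L) / 2 = (\<epsilon> / 2) / ((real n)^2 * L)"
      by simp
    then show ?thesis
      using assms n by (simp add: powr_divide powr_mult nt)
  qed
  finally show ?thesis .
qed

section \<open>The tail mixture\<close>

text \<open>In the notation of the header: mass = ||p_T||_1, base = a, height j = h_j,
  on_prob j = p_j / h_j and col_penalty j = D_j.\<close>

locale tail_mixture =
  fixes N n :: nat and p :: "nat \<Rightarrow> real" and T :: "nat set" and c \<epsilon> :: real
  assumes n_pos: "1 \<le> n"
    and p_range: "\<And>j. j < N \<Longrightarrow> 0 \<le> p j \<and> p j \<le> 1 / 2"
    and T_subset: "T \<subseteq> {..<N}"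
    and tail_sq_le: "(\<Sum>j\<in>T. (p j)^2) \<le> c / (real n)^2"
    and c_le: "c \<le> 1 / 4"
    and tail_mass_ge: "1 / real n \<le> (\<Sum>j\<in>T. p j)"
    and \<epsilon>_pos: "0 < \<epsilon>" and \<epsilon>_le: "\<epsilon> \<le> 1"
begin

definition "mass = (\<Sum>j\<in>T. p j)"
definition "base = \<epsilon> / ((real n)^2 * mass)"
definition "height j = max base (2 * p j)"
definition "on_prob j = (if j \<in> T then p j / height j else 0)"
definition "alt j b = (if j \<in> T then (if b then height j else 0) else p j)"
definition "col_penalty j X =
  (if j \<in> T then (if \<forall>l<n. \<not> X l j then (real n * p j)^2 else real n * height j) else 0)"
definition "penalty X = (\<Sum>j<N. col_penalty j X)"

lemma finite_T: "finite T"
  using T_subset finite_subset by blast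

lemma p_T: "j \<in> T \<Longrightarrow> 0 \<le> p j \<and> p j \<le> 1 / 2"
  using T_subset p_range by auto

lemma p_le_one: "j < N \<Longrightarrow> 0 \<le> p j \<and> p j \<le> 1"
  using p_range[of j] by auto

lemma n_mass_ge: "1 \<le> real n * mass"
  using tail_mass_ge n_pos unfolding mass_def by (simp add: field_simps)

lemma mass_pos: "0 < mass"
  using n_mass_ge n_pos by (smt (verit) mult_nonneg_nonpos of_nat_0_le_iff)

lemma base_pos: "0 < base"
  unfolding base_def using \<epsilon>_pos mass_pos n_pos by simp

lemma n_base_le: "real n * base \<le> \<epsilon>"
proof -
  have "real n * base = \<epsilon> / (real n * mass)"
    unfolding base_def using n_pos by (simp add: power2_eq_square field_simps)
  also have "\<dots> \<le> \<epsilon> / 1"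
    using n_mass_ge \<epsilon>_pos by (intro divide_left_mono) auto
  finally show ?thesis by simp
qed

lemma base_le_one: "base \<le> 1"
proof -
  have "base \<le> real n * base"
    using n_pos base_pos by simp
  then show ?thesis using n_base_le \<epsilon>_le by linarith
qed

lemma n_p_le_half:
  assumes "j \<in> T"
  shows "real n * p j \<le> 1 / 2"
proof -
  have "(p j)^2 \<le> (\<Sum>j\<in>T. (p j)^2)"
    using assms finite_T by (intro member_le_sum) auto
  then have "(real n)^2 * (p j)^2 \<le> (real n)^2 * (c / (real n)^2)"
    using tail_sq_le by (intro mult_left_mono) auto
  then have "(real n * p j)^2 \<le> c"
    using n_pos by (simp add: power_mult_distrib)
  then have "(real n * p j)^2 \<le> (1 / 2)^2"
    using c_le by (simp add: power2_eq_square)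
  then show ?thesis
    by (rule power2_le_imp_le) simp
qed

lemma height_props:
  assumes "j \<in> T"
  shows "0 < height j" "2 * p j \<le> height j" "height j \<le> 1" "real n * height j \<le> 1"
    "height j \<le> base + 2 * p j"
proof -
  note p = p_T[OF assms] and np = n_p_le_half[OF assms]
  show "0 < height j" "2 * p j \<le> height j"
    unfolding height_def using base_pos by auto
  show "height j \<le> 1" "height j \<le> base + 2 * p j"
    unfolding height_def using base_pos base_le_one p by auto
  show "real n * height j \<le> 1"
    unfolding height_def using n_base_le \<epsilon>_le np by (simp add: max_def)
qed

lemma on_prob_range: "0 \<le> on_prob j \<and> on_prob j \<le> 1"
  using height_props[of j] p_T[of j] by (auto simp: on_prob_def divide_le_eq_1)

lemma alt_range: "j < N \<Longrightarrow> 0 \<le> alt j b \<and> alt j b \<le> 1"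
  using height_props[of j] p_le_one[of j] by (auto simp: alt_def)

lemma col_penalty_range: "0 \<le> col_penalty j X \<and> col_penalty j X \<le> 1"
  using height_props[of j] n_p_le_half[of j] p_T[of j] n_pos
  by (auto simp: col_penalty_def power_le_one)

lemma penalty_nonneg: "0 \<le> penalty X"
  unfolding penalty_def using col_penalty_range by (auto intro: sum_nonneg)

lemma column_mixture_dominates:
  assumes "j < N"
  shows "(1 - col_penalty j X) * column_weight n (p j) (\<lambda>l. X l j)
    \<le> (1 - on_prob j) * column_weight n (alt j False) (\<lambda>l. X l j)
      + on_prob j * column_weight n (alt j True) (\<lambda>l. X l j)"
proof (cases "j \<in> T")
  case True
  then show ?thesis
    using column_mixture_ge[of "p j" "height j" n "\<lambda>l. X l j"] height_props[OF True] p_T[OF True]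
      n_p_le_half[OF True]
    by (simp add: col_penalty_def on_prob_def alt_def)
qed (simp add: col_penalty_def on_prob_def alt_def)

lemma mixture_dominates:
  "(1 - penalty X) * bin_weight N n p X
    \<le> (\<Sum>\<sigma>\<in>patterns N. pattern_weight N on_prob \<sigma> * bin_weight N n (\<lambda>j. alt j (\<sigma> j)) X)"
proof -
  have "(1 - penalty X) * bin_weight N n p X \<le> (\<Prod>j<N. 1 - col_penalty j X) * bin_weight N n p X"
    unfolding penalty_def using col_penalty_range bin_weight_nonneg[of N p n X] p_le_one
    by (intro mult_right_mono one_minus_sum_le_prod_one_minus) auto
  also have "\<dots> = (\<Prod>j<N. (1 - col_penalty j X) * column_weight n (p j) (\<lambda>l. X l j))"
    by (simp add: bin_weight_eq_prod_column_weight prod.distrib)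
  also have "\<dots> \<le> (\<Prod>j<N. (1 - on_prob j) * column_weight n (alt j False) (\<lambda>l. X l j)
      + on_prob j * column_weight n (alt j True) (\<lambda>l. X l j))"
    using col_penalty_range p_le_one
    by (intro prod_mono conjI column_mixture_dominates mult_nonneg_nonneg)
      (auto simp: column_weight_def intro!: prod_nonneg bernoulli_weight_nonneg)
  also have "\<dots> = (\<Sum>\<sigma>\<in>patterns N. pattern_weight N on_prob \<sigma> * bin_weight N n (\<lambda>j. alt j (\<sigma> j)) X)"
    by (rule sum_pattern_weight_bin_weight[symmetric])
  finally show ?thesis .
qed

lemma col_penalty_le:
  assumes "j \<in> T"
  shows "col_penalty j X \<le> (real n * p j)^2 + real n * height j * (\<Sum>l<n. if X l j then 1 else 0)"
proof -
  have height: "0 \<le> real n * height j"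
    using height_props[OF assms] by simp
  show ?thesis
  proof (cases "\<forall>l<n. \<not> X l j")
    case False
    then obtain l0 where "l0 < n" "X l0 j" by auto
    then have "1 \<le> (\<Sum>l<n. if X l j then 1 else (0::real))"
      using member_le_sum[of l0 "{..<n}" "\<lambda>l. if X l j then 1 else (0::real)"] by auto
    then have "real n * height j \<le> real n * height j * (\<Sum>l<n. if X l j then 1 else 0)"
      using height mult_left_mono by fastforce
    moreover have "col_penalty j X = real n * height j"
      using assms False by (auto simp: col_penalty_def)
    ultimately show ?thesis by (simp add: add_increasing)
  qed (use assms height in \<open>simp add: col_penalty_def\<close>)
qed

lemma expected_col_penalty_le:
  assumes "j \<in> T"
  shows "(\<Sum>X\<in>sample_space N n. col_penalty j X * bin_weight N n p X)
    \<le> 3 * (real n * p j)^2 + (real n)^2 * base * p j"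
proof -
  let ?count = "\<lambda>X. \<Sum>l<n. if X l j then 1 else 0 :: real"
  have "(\<Sum>X\<in>sample_space N n. col_penalty j X * bin_weight N n p X)
      \<le> (\<Sum>X\<in>sample_space N n. ((real n * p j)^2 + real n * height j * ?count X) * bin_weight N n p X)"
    using col_penalty_le[OF assms] bin_weight_nonneg[of N p n] p_le_one
    by (intro sum_mono mult_right_mono) auto
  also have "\<dots> = (real n * p j)^2 * (\<Sum>X\<in>sample_space N n. bin_weight N n p X)
      + real n * height j * (\<Sum>X\<in>sample_space N n. bin_weight N n p X * ?count X)"
    by (simp add: algebra_simps sum.distrib sum_distrib_left)
  also have "\<dots> = (real n * p j)^2 + (real n)^2 * (height j * p j)"
    using assms T_subset by (auto simp: sum_bin_weight sum_bin_weight_column_count power2_eq_square)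
  also have "\<dots> \<le> (real n * p j)^2 + (real n)^2 * ((base + 2 * p j) * p j)"
    using height_props[OF assms] p_T[OF assms] by (intro add_left_mono mult_left_mono mult_right_mono) auto
  also have "\<dots> = 3 * (real n * p j)^2 + (real n)^2 * base * p j"
    by (simp add: power2_eq_square algebra_simps)
  finally show ?thesis .
qed

lemma expected_penalty_le: "(\<Sum>X\<in>sample_space N n. penalty X * bin_weight N n p X) \<le> 3 * c + \<epsilon>"
proof -
  have "(\<Sum>X\<in>sample_space N n. penalty X * bin_weight N n p X)
      = (\<Sum>j\<in>T. \<Sum>X\<in>sample_space N n. col_penalty j X * bin_weight N n p X)"
    unfolding penalty_def sum_distrib_right
    using T_subset by (subst sum.swap, intro sum.mono_neutral_right) (auto simp: col_penalty_def)
  also have "\<dots> \<le> (\<Sum>j\<in>T. 3 * (real n * p j)^2 + (real n)^2 * base * p j)"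
    by (rule sum_mono) (rule expected_col_penalty_le)
  also have "\<dots> = 3 * ((real n)^2 * (\<Sum>j\<in>T. (p j)^2)) + \<epsilon>"
    unfolding base_def mass_def using mass_pos n_pos
    by (simp add: sum.distrib power_mult_distrib sum_distrib_left[symmetric]
        sum_divide_distrib[symmetric] mass_def)
  also have "\<dots> \<le> 3 * c + \<epsilon>"
    using tail_sq_le n_pos by (simp add: field_simps)
  finally show ?thesis .
qed

definition "light = {j \<in> T. 2 * p j \<le> base}"
definition "lit_count \<sigma> = (\<Sum>j\<in>light. if \<sigma> j then 1 else 0 :: real)"

lemma finite_light: "finite light"
  unfolding light_def using finite_T by simp

lemma light_subset: "light \<subseteq> T"
  unfolding light_def by auto

lemma lit_count_nonneg: "0 \<le> lit_count \<sigma>"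
  unfolding lit_count_def by (rule sum_nonneg) auto

lemma heavy_coordinate_distance:
  assumes "j \<in> T - light" "1 \<le> t"
  shows "(base / 2) powr (t - 1) * p j \<le> \<bar>p j - alt j b\<bar> powr t"
proof -
  have "base / 2 < p j" "j \<in> T"
    using assms unfolding light_def by auto
  moreover from this have "p j \<le> \<bar>p j - alt j b\<bar>"
    using height_props(2)[of j] p_T[of j] by (auto simp: alt_def)
  ultimately show ?thesis
    using base_pos assms by (intro mult_powr_le_powr) auto
qed

lemma light_coordinate_distance:
  assumes "j \<in> light" "1 \<le> t"
  shows "(base / 2) powr (t - 1) * (base / 2 * (if b then 1 else 0)) \<le> \<bar>p j - alt j b\<bar> powr t"
proof (cases b)
  case True
  have "j \<in> T" "2 * p j \<le> base"
    using assms unfolding light_def by auto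
  then have "base / 2 \<le> \<bar>p j - alt j b\<bar>"
    using True p_T[of j] by (simp add: alt_def height_def abs_if)
  then show ?thesis
    using mult_powr_le_powr[of "base / 2" "base / 2" "\<bar>p j - alt j b\<bar>" t] True base_pos assms by simp
qed simp

lemma distance_powr_ge:
  assumes "1 \<le> t"
  shows "(base / 2) powr (t - 1) * ((\<Sum>j\<in>T - light. p j) + base / 2 * lit_count \<sigma>)
    \<le> (\<Sum>j<N. \<bar>p j - alt j (\<sigma> j)\<bar> powr t)"
proof -
  let ?d = "\<lambda>j. \<bar>p j - alt j (\<sigma> j)\<bar> powr t"
  have "(base / 2) powr (t - 1) * ((\<Sum>j\<in>T - light. p j) + base / 2 * lit_count \<sigma>)
      \<le> (\<Sum>j\<in>T - light. ?d j) + (\<Sum>j\<in>light. ?d j)"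
    unfolding distrib_left lit_count_def sum_distrib_left
    using heavy_coordinate_distance light_coordinate_distance assms by (intro add_mono sum_mono) auto
  also have "\<dots> = (\<Sum>j\<in>T. ?d j)"
    by (rule sum.subset_diff[OF light_subset finite_T, symmetric])
  also have "\<dots> \<le> (\<Sum>j<N. ?d j)"
    using T_subset by (intro sum_mono2) auto
  finally show ?thesis .
qed

text \<open>The light coordinates are switched on independently, so the exponential moment of their
  number factorizes; this is the Chernoff bound for its lower tail.\<close>

lemma sum_pattern_weight_exp_lit_count_le:
  "(\<Sum>\<sigma>\<in>patterns N. pattern_weight N on_prob \<sigma> * exp (- lit_count \<sigma>))
    \<le> exp (- (\<Sum>j\<in>light. on_prob j) / 2)"
proof -
  let ?f = "\<lambda>j b. bernoulli_weight (on_prob j) b * (if j \<in> light \<and> b then exp (-1) else 1)"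
  have light_N: "{..<N} \<inter> light = light"
    using light_subset T_subset by auto
  have exp_lit_count: "exp (- lit_count \<sigma>) = (\<Prod>j<N. if j \<in> light \<and> \<sigma> j then exp (-1) else 1)" for \<sigma>
  proof -
    have "exp (- lit_count \<sigma>) = (\<Prod>j\<in>light. exp (- (if \<sigma> j then 1 else 0)))"
      unfolding lit_count_def by (simp add: exp_sum[OF finite_light, symmetric] sum_negf)
    also have "\<dots> = (\<Prod>j\<in>{..<N} \<inter> light. if \<sigma> j then exp (-1) else 1)"
      unfolding light_N by (rule prod.cong) auto
    also have "\<dots> = (\<Prod>j<N. if j \<in> light \<and> \<sigma> j then exp (-1) else 1)"
      by (subst prod.inter_restrict) (auto intro: prod.cong)
    finally show ?thesis .
  qed
  have "(\<Sum>\<sigma>\<in>patterns N. pattern_weight N on_prob \<sigma> * exp (- lit_count \<sigma>))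
      = (\<Sum>\<sigma>\<in>patterns N. \<Prod>j<N. ?f j (\<sigma> j))"
    by (simp add: pattern_weight_def exp_lit_count prod.distrib)
  also have "\<dots> = (\<Prod>j<N. ?f j True + ?f j False)"
    by (rule sum_patterns_prod)
  also have "\<dots> \<le> (\<Prod>j<N. if j \<in> light then exp (- on_prob j / 2) else 1)"
  proof (rule prod_mono)
    fix j
    have "exp (-1::real) \<le> 1 / 2"
      using exp_ge_add_one_self[of 1] by (simp add: exp_minus field_simps)
    then have "on_prob j * exp (-1) \<le> on_prob j * (1 / 2)"
      using on_prob_range[of j] by (intro mult_left_mono) auto
    then show "0 \<le> ?f j True + ?f j False \<and> ?f j True + ?f j False
        \<le> (if j \<in> light then exp (- on_prob j / 2) else 1)"
      using exp_ge_add_one_self[of "- on_prob j / 2"] on_prob_range[of j]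
      by (auto simp: bernoulli_weight_def)
  qed
  also have "\<dots> = exp (- (\<Sum>j\<in>light. on_prob j) / 2)"
    by (simp add: prod.If_cases light_N exp_sum[OF finite_light, symmetric] sum_negf sum_divide_distrib)
  finally show ?thesis .
qed

lemma far_if_spread:
  assumes "1 \<le> t" "0 < \<rho>" and threshold: "\<rho> powr t \<le> mass / 16 * (base / 2) powr (t - 1)"
    and spread: "mass / 16 \<le> (\<Sum>j\<in>T - light. p j) + base / 2 * lit_count \<sigma>"
  shows "\<rho> \<le> lt_norm N t (\<lambda>j. p j - alt j (\<sigma> j))"
proof (rule lt_norm_ge[OF assms(2,1)])
  have "\<rho> powr t \<le> (base / 2) powr (t - 1) * (mass / 16)"
    using threshold by (simp add: mult.commute)
  also have "\<dots> \<le> (base / 2) powr (t - 1) * ((\<Sum>j\<in>T - light. p j) + base / 2 * lit_count \<sigma>)"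
    using spread by (intro mult_left_mono) auto
  also have "\<dots> \<le> (\<Sum>j<N. \<bar>p j - alt j (\<sigma> j)\<bar> powr t)"
    by (rule distance_powr_ge[OF assms(1)])
  finally show "\<rho> powr t \<le> (\<Sum>j<N. \<bar>p j - alt j (\<sigma> j)\<bar> powr t)" .
qed

lemma exp_neg_mass_ratio_le: "exp (- (mass / (8 * base))) \<le> 8 * \<epsilon>"
proof -
  let ?K = "mass / (8 * base)"
  have K_pos: "0 < ?K"
    using mass_pos base_pos by simp
  have "exp (- ?K) = 1 / exp ?K"
    by (simp add: exp_minus inverse_eq_divide)
  also have "\<dots> \<le> 1 / ?K"
  proof (rule divide_left_mono)
    show "?K \<le> exp ?K"
      using exp_ge_add_one_self[of ?K] by linarith
  qed (use K_pos mult_pos_pos[OF exp_gt_zero K_pos] in auto)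
  also have "\<dots> = 8 * \<epsilon> / (real n * mass)^2"
    unfolding base_def using mass_pos n_pos by (simp add: field_simps power2_eq_square)
  also have "\<dots> \<le> 8 * \<epsilon> / 1"
    using n_mass_ge \<epsilon>_pos n_pos by (intro divide_left_mono) (auto simp: one_le_power)
  finally show ?thesis by simp
qed

lemma near_alternative_bounds:
  assumes "1 \<le> t" "0 < \<rho>" "\<rho> powr t \<le> mass / 16 * (base / 2) powr (t - 1)"
    and near: "\<not> \<rho> \<le> lt_norm N t (\<lambda>j. p j - alt j (\<sigma> j))"
  shows "(\<Sum>j\<in>T - light. p j) < mass / 16" "lit_count \<sigma> < mass / (8 * base)"
proof -
  have spread: "(\<Sum>j\<in>T - light. p j) + base / 2 * lit_count \<sigma> < mass / 16"
    using near far_if_spread[OF assms(1-3)] by force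
  moreover have "0 \<le> (\<Sum>j\<in>T - light. p j)"
    using p_T by (intro sum_nonneg) auto
  moreover have "0 \<le> base / 2 * lit_count \<sigma>"
    using base_pos lit_count_nonneg by simp
  ultimately show "(\<Sum>j\<in>T - light. p j) < mass / 16" "lit_count \<sigma> < mass / (8 * base)"
    using base_pos by (simp_all add: field_simps)
qed

lemma sum_light_on_prob: "(\<Sum>j\<in>light. on_prob j) = (\<Sum>j\<in>light. p j) / base"
  unfolding sum_divide_distrib by (rule sum.cong) (auto simp: on_prob_def light_def height_def)

lemma small_distance_prob_le:
  assumes "1 \<le> t" "0 < \<rho>" "\<rho> powr t \<le> mass / 16 * (base / 2) powr (t - 1)"
  shows "(\<Sum>\<sigma>\<in>patterns N. pattern_weight N on_prob \<sigma>
      * (if \<rho> \<le> lt_norm N t (\<lambda>j. p j - alt j (\<sigma> j)) then 0 else 1)) \<le> 8 * \<epsilon>"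
proof (cases "\<forall>\<sigma>. \<rho> \<le> lt_norm N t (\<lambda>j. p j - alt j (\<sigma> j))")
  case False
  let ?K = "mass / (8 * base)"
  obtain \<sigma>0 where "\<not> \<rho> \<le> lt_norm N t (\<lambda>j. p j - alt j (\<sigma>0 j))"
    using False by blast
  then have "(\<Sum>j\<in>T - light. p j) < mass / 16"
    by (rule near_alternative_bounds(1)[OF assms])
  moreover have "mass = (\<Sum>j\<in>T - light. p j) + (\<Sum>j\<in>light. p j)"
    unfolding mass_def by (rule sum.subset_diff[OF light_subset finite_T])
  ultimately have on_light: "2 * ?K \<le> (\<Sum>j\<in>light. on_prob j) / 2"
    using base_pos mass_pos by (simp add: sum_light_on_prob field_simps)
  have "pattern_weight N on_prob \<sigma> * (if \<rho> \<le> lt_norm N t (\<lambda>j. p j - alt j (\<sigma> j)) then 0 else 1)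
      \<le> exp ?K * (pattern_weight N on_prob \<sigma> * exp (- lit_count \<sigma>))" for \<sigma>
  proof (cases "\<rho> \<le> lt_norm N t (\<lambda>j. p j - alt j (\<sigma> j))")
    case False
    then have "lit_count \<sigma> < ?K"
      by (rule near_alternative_bounds(2)[OF assms])
    then have "1 \<le> exp ?K * exp (- lit_count \<sigma>)"
      by (simp add: exp_minus field_simps)
    moreover have "0 \<le> pattern_weight N on_prob \<sigma>"
      using on_prob_range by (rule pattern_weight_nonneg)
    ultimately show ?thesis
      using False mult_left_mono[of 1 "exp ?K * exp (- lit_count \<sigma>)" "pattern_weight N on_prob \<sigma>"]
      by (simp add: algebra_simps)
  qed (simp add: pattern_weight_nonneg on_prob_range)
  then have "(\<Sum>\<sigma>\<in>patterns N. pattern_weight N on_prob \<sigma>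
      * (if \<rho> \<le> lt_norm N t (\<lambda>j. p j - alt j (\<sigma> j)) then 0 else 1))
      \<le> exp ?K * (\<Sum>\<sigma>\<in>patterns N. pattern_weight N on_prob \<sigma> * exp (- lit_count \<sigma>))"
    unfolding sum_distrib_left by (rule sum_mono)
  also have "\<dots> \<le> exp ?K * exp (- (2 * ?K))"
    using sum_pattern_weight_exp_lit_count_le on_light by (simp add: order_trans)
  also have "\<dots> = exp (- ?K)"
    by (simp add: exp_add[symmetric])
  finally show ?thesis
    using exp_neg_mass_ratio_le by simp
qed (use \<epsilon>_pos in simp)

lemma risk_ge:
  assumes "1 \<le> t" "0 < \<rho>" "\<rho> powr t \<le> mass / 16 * (base / 2) powr (t - 1)"
  shows "1 - 3 * c - 9 * \<epsilon> \<le> risk N n p t \<rho> \<psi>"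
proof -
  have "1 - (3 * c + \<epsilon>) - 8 * \<epsilon> \<le> risk N n p t \<rho> \<psi>"
    by (rule risk_ge_mixture[OF on_prob_range alt_range p_le_one penalty_nonneg mixture_dominates
          expected_penalty_le small_distance_prob_le[OF assms]])
  then show ?thesis by simp
qed

lemma critical_radius_ge_mass:
  assumes "1 \<le> t" "1 \<le> N" "0 \<le> \<eta>" "\<eta> < 1 - 3 * c - 9 * \<epsilon>"
  shows "\<epsilon> / 32 * mass powr ((2 - t) / t) / real n powr ((2 * t - 2) / t) \<le> critical_radius N n p t \<eta>"
proof (rule critical_radius_ge[OF p_le_one assms(1-3)])
  fix \<rho> assume "0 < \<rho>" "\<rho> < \<epsilon> / 32 * mass powr ((2 - t) / t) / real n powr ((2 * t - 2) / t)"
  then have "\<rho> powr t \<le> mass / 16 * (base / 2) powr (t - 1)"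
    unfolding base_def using \<epsilon>_pos \<epsilon>_le mass_pos n_pos assms by (intro radius_threshold) auto
  then have "1 - 3 * c - 9 * \<epsilon> \<le> minimax_risk N n p t \<rho>"
    using assms \<open>0 < \<rho>\<close> by (intro minimax_risk_ge risk_ge)
  then show "\<eta> < minimax_risk N n p t \<rho>"
    using assms by linarith
qed

end

lemma critical_radius_ge_tail_l1:
  fixes p :: "nat \<Rightarrow> real"
  assumes "\<forall>j<N. 0 \<le> p j \<and> p j \<le> 1 / 2" "1 \<le> N" "1 \<le> n" "1 \<le> t"
    and "0 < \<epsilon>" "\<epsilon> \<le> 1" "0 < c" "c \<le> 1 / 4" "0 \<le> \<eta>" "\<eta> < 1 - 3 * c - 9 * \<epsilon>"
    and "1 / real n \<le> tail_l1 N p (tail_index N n p c)"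
  shows "\<epsilon> / 32 * tail_l1 N p (tail_index N n p c) powr ((2 - t) / t) / real n powr ((2 * t - 2) / t)
    \<le> critical_radius N n p t \<eta>"
proof -
  define I where "I = tail_index N n p c"
  have I: "I \<le> N \<and> (\<Sum>j\<in>{I..<N}. (p j)^2) \<le> c / (real n)^2"
    unfolding I_def tail_index_def by (rule LeastI[of _ N]) (use assms in auto)
  have tail: "tail_l1 N p I = (\<Sum>j\<in>{I..<N}. p j)"
    unfolding tail_l1_def using assms by (intro sum.cong) auto
  interpret tail_mixture N n p "{I..<N}" c \<epsilon>
    using assms I tail unfolding I_def by unfold_locales auto
  have "mass = tail_l1 N p I"
    unfolding mass_def tail ..
  then show ?thesis
    using critical_radius_ge_mass[of t \<eta>] assms unfolding I_def by simp
qed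

theorem lemmaA4:
  fixes \<eta> :: real
  assumes "0 < \<eta>" "\<eta> < 1"
  shows "\<exists>c0 > 0. \<forall>cI. 0 < cI \<and> cI \<le> c0 \<longrightarrow>
    (\<exists>C > 0. \<forall>(N::nat) (n::nat) (p::nat \<Rightarrow> real) (t::real).
       2 \<le> N \<and> 2 \<le> n \<and> even n \<and>
       (\<forall>j<N. 0 \<le> p j \<and> p j \<le> 1 / 2) \<and>
       (\<forall>i j. i \<le> j \<and> j < N \<longrightarrow> p j \<le> p i) \<and>
       1 \<le> t \<and> t \<le> 2 \<and>
       tail_l1 N p (tail_index N n p cI) \<ge> 1 / real n
       \<longrightarrow> critical_radius N n p t \<eta> \<ge>
            C * tail_l1 N p (tail_index N n p cI) powr ((2 - t) / t)
              / real n powr ((2 * t - 2) / t))"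
proof -
  define \<epsilon> where "\<epsilon> = (1 - \<eta>) / 20"
  have "0 < \<epsilon>" "\<epsilon> \<le> 1 / 20" "\<eta> < 1 - 15 * \<epsilon>"
    using assms unfolding \<epsilon>_def by (auto simp: field_simps)
  then show ?thesis
    using assms
    by (intro exI[of _ "2 * \<epsilon>"] conjI allI impI exI[of _ "\<epsilon> / 32"] critical_radius_ge_tail_l1) auto
qed

end
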